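(* Let $\mathcal V$, $\mathcal W$, $\mathcal Z$ be complex Hilbert spaces and let $R:\mathcal Z\supset\operatorname{dom}R\to\mathcal V\times\mathcal W$ be a linear operator. Let $P_{\mathcal V}$ and $P_{\mathcal W}$ denote the canonical projections of $\mathcal V\times\mathcal W$ onto $\mathcal V$ and $\mathcal W$, and regard $P_{\mathcal V}R$ and $P_{\mathcal W}R$ as operators with domain $\operatorname{dom}R$. Then the following statements are equivalent: (i) $R$ is closed, and $P_{\mathcal V}R$ is closed with domain $\operatorname{dom}(P_{\mathcal V}R)=\operatorname{dom}R$; (ii) $P_{\mathcal V}R$ is closed with domain $\operatorname{dom}(P_{\mathcal V}R)=\operatorname{dom}R$, and $P_{\mathcal W}R\in L(\operatorname{dom}(P_{\mathcal V}R),\mathcal W)$; (iii) $R$ is closed, and $P_{\mathcal W}R\in L(\operatorname{dom}(P_{\mathcal V}R),\mathcal W)$.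
   Context: Here $\operatorname{dom}(P_{\mathcal V}R)=\operatorname{dom}R$ is equipped with the graph norm $\|z\|=(\|z\|_{\mathcal Z}^2+\|P_{\mathcal V}Rz\|_{\mathcal V}^2)^{1/2}$, and $L(\cdot,\cdot)$ denotes the space of bounded linear operators. *)

theory Defs
  imports "HOL-Analysis.Analysis"
begin

text \<open>A complex Hilbert space is modelled as a real Hilbert space (type class
  real_inner + complete_space, the realification) together with a complex
  structure J (multiplication by the imaginary unit): J is real-linear,
  J (J x) = - x, and J preserves the real inner product.  The complex inner
  product is then  inner x y + i * inner x (J y).\<close>

definition complex_structure :: "('a::real_inner \<Rightarrow> 'a) \<Rightarrow> bool" where
  "complex_structure J \<longleftrightarrow> linear J \<and> (\<forall>x. J (J x) = - x) \<and> (\<forall>x y. inner (J x) (J y) = inner x y)"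

definition lin_op ::
  "('a::real_vector \<Rightarrow> 'a) \<Rightarrow> ('b::real_vector \<Rightarrow> 'b) \<Rightarrow> 'a set \<Rightarrow> ('a \<Rightarrow> 'b) \<Rightarrow> bool" where
  "lin_op Ja Jb D T \<longleftrightarrow>
     subspace D \<and> (\<forall>x\<in>D. Ja x \<in> D) \<and>
     (\<forall>x\<in>D. \<forall>y\<in>D. T (x + y) = T x + T y) \<and>
     (\<forall>x\<in>D. \<forall>c::real. T (c *\<^sub>R x) = c *\<^sub>R T x) \<and>
     (\<forall>x\<in>D. T (Ja x) = Jb (T x))"

definition graph_op :: "'a set \<Rightarrow> ('a \<Rightarrow> 'b) \<Rightarrow> ('a \<times> 'b) set" where
  "graph_op D T = {(x, T x) | x. x \<in> D}"

definition closed_op :: "'a::topological_space set \<Rightarrow> ('a \<Rightarrow> 'b::topological_space) \<Rightarrow> bool" where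
  "closed_op D T \<longleftrightarrow> closed (graph_op D T)"

definition graph_norm :: "('a::real_normed_vector \<Rightarrow> 'b::real_normed_vector) \<Rightarrow> 'a \<Rightarrow> real" where
  "graph_norm A z = sqrt ((norm z)\<^sup>2 + (norm (A z))\<^sup>2)"

text \<open>B \<in> L(dom A, Y), where dom A = D carries the graph norm of A:
  B is (complex-)linear on D and bounded with respect to the graph norm of A.\<close>

definition bounded_wrt_graph ::
  "('a::real_normed_vector \<Rightarrow> 'a) \<Rightarrow> ('c::real_normed_vector \<Rightarrow> 'c) \<Rightarrow> 'a set \<Rightarrow>
   ('a \<Rightarrow> 'b::real_normed_vector) \<Rightarrow> ('a \<Rightarrow> 'c) \<Rightarrow> bool" where
  "bounded_wrt_graph Ja Jc D A B \<longleftrightarrow>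
     lin_op Ja Jc D B \<and> (\<exists>C. \<forall>z\<in>D. norm (B z) \<le> C * graph_norm A z)"

end

theory Submission
  imports Defs
begin

text \<open>Write \<open>F = P\<^sub>V R\<close> and \<open>H = P\<^sub>W R\<close>. Up to the isometry \<open>(z, (v, w)) \<mapsto> ((z, v), w)\<close>,
  the graph of \<open>R\<close> is the graph of the map \<open>S (z, F z) = H z\<close> defined on the graph of \<open>F\<close>,
  and \<open>H \<in> L(dom F, W)\<close> says precisely that \<open>S\<close> is bounded. A bounded \<open>S\<close> is uniformly
  continuous, so its graph is closed iff its domain is, i.e. \<open>R\<close> is closed iff \<open>F\<close> is; this
  gives (ii) \<open>\<longleftrightarrow>\<close> (iii). If \<open>R\<close> and \<open>F\<close> are closed, \<open>S\<close> is a linear map with closed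
  graph on a closed subspace of the Hilbert space \<open>Z \<times> V\<close>, hence bounded by the closed graph
  theorem, a consequence of the Baire category theorem; this gives (i) \<open>\<longrightarrow>\<close> (ii).\<close>

definition real_linear_on :: "'a::real_vector set \<Rightarrow> ('a \<Rightarrow> 'b::real_vector) \<Rightarrow> bool" where
  "real_linear_on X T \<longleftrightarrow> subspace X \<and>
     (\<forall>x\<in>X. \<forall>y\<in>X. T (x + y) = T x + T y) \<and> (\<forall>x\<in>X. \<forall>c. T (c *\<^sub>R x) = c *\<^sub>R T x)"

lemma real_linear_onD:
  assumes "real_linear_on X T"
  shows "subspace X" and "x \<in> X \<Longrightarrow> y \<in> X \<Longrightarrow> T (x + y) = T x + T y"
    and "x \<in> X \<Longrightarrow> T (c *\<^sub>R x) = c *\<^sub>R T x"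
  using assms by (auto simp: real_linear_on_def)

lemma real_linear_on_zero: "real_linear_on X T \<Longrightarrow> T 0 = 0"
  using real_linear_onD(3)[of X T 0 0] by (simp add: real_linear_on_def subspace_0)

lemma real_linear_on_diff:
  assumes "real_linear_on X T" "x \<in> X" "y \<in> X"
  shows "T (x - y) = T x - T y"
proof -
  have "x - y \<in> X" using real_linear_onD(1)[OF assms(1)] assms(2,3) by (rule subspace_diff)
  then have "T (x - y) + T y = T x"
    using real_linear_onD(2)[OF assms(1) _ assms(3)] by (metis diff_add_cancel)
  then show ?thesis by (simp add: eq_diff_eq)
qed

lemma real_linear_on_sum:
  fixes N :: nat
  assumes "real_linear_on X T" "\<And>k. y k \<in> X"
  shows "T (\<Sum>k<N. y k) = (\<Sum>k<N. T (y k))"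
proof (induction N)
  case 0
  show ?case using real_linear_on_zero[OF assms(1)] by simp
next
  case (Suc N)
  have "(\<Sum>k<N. y k) \<in> X"
    using real_linear_onD(1)[OF assms(1)] assms(2) by (simp add: subspace_sum)
  then show ?case using Suc real_linear_onD(2)[OF assms(1)] assms(2) by simp
qed

lemma real_linear_on_linear_comp:
  "real_linear_on D R \<Longrightarrow> linear f \<Longrightarrow> real_linear_on D (f \<circ> R)"
  by (simp add: real_linear_on_def linear_add linear_scale)

lemma real_linear_on_sublevel:
  fixes T :: "'a::real_normed_vector \<Rightarrow> 'b::real_normed_vector"
  assumes lin: "real_linear_on X T"
  shows "convex {x\<in>X. norm (T x) \<le> c}"
    and "x \<in> {x\<in>X. norm (T x) \<le> c} \<Longrightarrow> - x \<in> {x\<in>X. norm (T x) \<le> c}"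
proof -
  note X = real_linear_onD(1)[OF lin]
  show "convex {x\<in>X. norm (T x) \<le> c}"
  proof (rule convexI)
    fix x y and u v :: real
    assume x: "x \<in> {x\<in>X. norm (T x) \<le> c}" and y: "y \<in> {x\<in>X. norm (T x) \<le> c}"
      and uv: "0 \<le> u" "0 \<le> v" "u + v = 1"
    have "norm (T (u *\<^sub>R x + v *\<^sub>R y)) = norm (u *\<^sub>R T x + v *\<^sub>R T y)"
      using x y X real_linear_onD(2,3)[OF lin] by (simp add: subspace_scale)
    also have "\<dots> \<le> u * norm (T x) + v * norm (T y)"
      using uv norm_triangle_ineq[of "u *\<^sub>R T x" "v *\<^sub>R T y"] by simp
    also have "\<dots> \<le> u * c + v * c"
      using x y uv by (intro add_mono mult_left_mono) auto
    also have "\<dots> = c"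
      using uv by (simp flip: distrib_right)
    finally show "u *\<^sub>R x + v *\<^sub>R y \<in> {x\<in>X. norm (T x) \<le> c}"
      using x y X by (simp add: subspace_add subspace_scale)
  qed
  show "- x \<in> {x\<in>X. norm (T x) \<le> c}" if "x \<in> {x\<in>X. norm (T x) \<le> c}"
    using that X real_linear_onD(3)[OF lin, of x "- 1"] by (simp add: subspace_neg)
qed

lemma real_linear_on_lipschitz:
  fixes T :: "'a::real_normed_vector \<Rightarrow> 'b::real_normed_vector"
  assumes lin: "real_linear_on X T" and bound: "\<forall>x\<in>X. norm (T x) \<le> C * norm x"
  shows "(max C 0)-lipschitz_on X T"
proof (rule lipschitz_onI)
  fix x y assume "x \<in> X" "y \<in> X"
  then have "x - y \<in> X" "T x - T y = T (x - y)"
    using real_linear_on_diff[OF lin] real_linear_onD(1)[OF lin] by (simp_all add: subspace_diff)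
  then have "norm (T x - T y) \<le> C * norm (x - y)"
    using bound by simp
  also have "\<dots> \<le> max C 0 * norm (x - y)"
    by (simp add: mult_right_mono)
  finally show "dist (T x) (T y) \<le> max C 0 * dist x y"
    by (simp add: dist_norm)
qed simp

lemma mem_graph_op_iff: "p \<in> graph_op D T \<longleftrightarrow> fst p \<in> D \<and> snd p = T (fst p)"
  by (cases p) (auto simp: graph_op_def)

lemma ball_graph_op: "(\<forall>p\<in>graph_op D T. P p) \<longleftrightarrow> (\<forall>x\<in>D. P (x, T x))"
  by (auto simp: graph_op_def)

lemma graph_op_eq_image: "graph_op S f = (\<lambda>x. (x, f x)) ` S"
  by (auto simp: graph_op_def)

lemma closed_graph_op:
  fixes f :: "'a::topological_space \<Rightarrow> 'b::real_normed_vector"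
  assumes "continuous_on S f" "closed S"
  shows "closed (graph_op S f)"
proof -
  have "closedin (top_of_set (S \<times> UNIV)) (graph_op S f)"
    unfolding graph_op_eq_image using assms(1) by (rule continuous_closed_graph_gen) simp
  then show ?thesis
    using closedin_closed_trans closed_Times[OF assms(2) closed_UNIV] by blast
qed

lemma closed_domain_of_closed_graph_op:
  fixes f :: "'a::metric_space \<Rightarrow> 'b::complete_space"
  assumes f: "Cauchy_continuous_on S f" and G: "closed (graph_op S f)"
  shows "closed S"
  unfolding closed_sequential_limits
proof (intro allI impI, elim conjE)
  fix s l assume s: "\<forall>n. s n \<in> S" and sl: "s \<longlonglongrightarrow> l"
  have "Cauchy (f \<circ> s)"
    using f LIMSEQ_imp_Cauchy[OF sl] s unfolding Cauchy_continuous_on_def by blast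
  then obtain w where "(f \<circ> s) \<longlonglongrightarrow> w"
    using Cauchy_convergent convergent_def by blast
  then have "(\<lambda>n. (s n, f (s n))) \<longlonglongrightarrow> (l, w)"
    using tendsto_Pair[OF sl] by (simp add: comp_def)
  moreover have "(s n, f (s n)) \<in> graph_op S f" for n
    using s by (simp add: mem_graph_op_iff)
  ultimately have "(l, w) \<in> graph_op S f"
    by (rule closed_sequentially[OF G, rotated])
  then show "l \<in> S"
    by (simp add: mem_graph_op_iff)
qed

lemma closed_graph_op_iff_closed_domain:
  fixes f :: "'a::metric_space \<Rightarrow> 'b::{real_normed_vector, complete_space}"
  assumes "uniformly_continuous_on S f"
  shows "closed (graph_op S f) \<longleftrightarrow> closed S"
  using closed_graph_op[OF uniformly_continuous_imp_continuous[OF assms]]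
    closed_domain_of_closed_graph_op[OF uniformly_continuous_imp_Cauchy_continuous[OF assms]]
  by blast

lemma real_linear_on_graph_op:
  assumes F: "real_linear_on D F" and H: "real_linear_on D H"
  shows "real_linear_on (graph_op D F) (\<lambda>p. H (fst p))"
proof -
  note D = real_linear_onD(1)[OF F]
  have "subspace (graph_op D F)"
    unfolding subspace_def ball_graph_op
    using D real_linear_onD(2,3)[OF F] real_linear_on_zero[OF F]
    by (simp add: mem_graph_op_iff subspace_0 subspace_add subspace_scale)
  then show ?thesis
    using real_linear_onD(2,3)[OF H] by (simp add: real_linear_on_def mem_graph_op_iff)
qed

lemma closed_graph_op_pair_iff:
  fixes F :: "'a::topological_space \<Rightarrow> 'b::topological_space" and H :: "'a \<Rightarrow> 'c::topological_space"
  shows "closed (graph_op D (\<lambda>z. (F z, H z))) \<longleftrightarrow> closed (graph_op (graph_op D F) (\<lambda>p. H (fst p)))"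
    (is "closed ?GR \<longleftrightarrow> closed ?GG")
proof
  have "?GG = (\<lambda>q. (fst (fst q), snd (fst q), snd q)) -` ?GR"
    by (auto simp: mem_graph_op_iff)
  moreover assume "closed ?GR"
  ultimately show "closed ?GG"
    by (simp add: continuous_closed_vimage continuous_intros)
next
  have "?GR = (\<lambda>q. ((fst q, fst (snd q)), snd (snd q))) -` ?GG"
    by (auto simp: mem_graph_op_iff)
  moreover assume "closed ?GG"
  ultimately show "closed ?GR"
    by (simp add: continuous_closed_vimage continuous_intros)
qed

section \<open>Series in complete normed spaces\<close>

text \<open>The library proves the comparison test and its norm bound for class \<open>banach\<close>; type
  variables of sort \<open>{real_normed_vector, complete_space}\<close>, such as those of the theorem, are
  not known to belong to that class.\<close>

lemma dist_partial_sums_le: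
  fixes f :: "nat \<Rightarrow> 'a::real_normed_vector"
  assumes f: "\<And>n. norm (f n) \<le> g n"
  shows "dist (\<Sum>k<m. f k) (\<Sum>k<n. f k) \<le> dist (\<Sum>k<m. g k) (\<Sum>k<n. g k)"
proof -
  have le: "dist (\<Sum>k<m. f k) (\<Sum>k<n. f k) \<le> dist (\<Sum>k<m. g k) (\<Sum>k<n. g k)"
    if "n \<le> m" for m n
  proof -
    have "dist (\<Sum>k<m. f k) (\<Sum>k<n. f k) = norm (\<Sum>k\<in>{n..<m}. f k)"
      using that by (simp add: dist_norm sum_diff_nat_ivl flip: atLeast0LessThan)
    also have "\<dots> \<le> (\<Sum>k\<in>{n..<m}. g k)"
      using f by (rule sum_norm_le)
    also have "\<dots> = dist (\<Sum>k<m. g k) (\<Sum>k<n. g k)"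
      using that f[THEN order_trans[OF norm_ge_zero]]
      by (simp add: dist_real_def sum_diff_nat_ivl sum_nonneg flip: atLeast0LessThan)
    finally show ?thesis .
  qed
  show ?thesis
    using le[of n m] le[of m n] by (cases "n \<le> m") (simp_all add: dist_commute)
qed

lemma summable_comparison_test_complete:
  fixes f :: "nat \<Rightarrow> 'a::{real_normed_vector, complete_space}"
  assumes f: "\<And>n. norm (f n) \<le> g n" and g: "summable g"
  shows "summable f"
proof -
  have "Cauchy (\<lambda>N. \<Sum>k<N. g k)"
    using g by (simp add: summable_iff_convergent convergent_Cauchy)
  then have "Cauchy (\<lambda>N. \<Sum>k<N. f k)"
    unfolding Cauchy_def using dist_partial_sums_le[OF f] by (meson le_less_trans)
  then show ?thesis
    by (simp add: summable_iff_convergent Cauchy_convergent)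
qed

lemma norm_suminf_le_complete:
  fixes f :: "nat \<Rightarrow> 'a::{real_normed_vector, complete_space}"
  assumes f: "\<And>n. norm (f n) \<le> g n" and g: "summable g"
  shows "norm (suminf f) \<le> suminf g"
proof (rule tendsto_upperbound)
  show "(\<lambda>N. norm (\<Sum>k<N. f k)) \<longlonglongrightarrow> norm (suminf f)"
    by (intro tendsto_norm summable_LIMSEQ summable_comparison_test_complete[OF f g])
  have "norm (\<Sum>k<N. f k) \<le> suminf g" for N
    using sum_norm_le[of "{..<N}" f g] f sum_le_suminf[OF g, of "{..<N}"]
      f[THEN order_trans[OF norm_ge_zero]] by fastforce
  then show "\<forall>\<^sub>F N in sequentially. norm (\<Sum>k<N. f k) \<le> suminf g"
    by simp
qed simp

section \<open>The closed graph theorem\<close>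

lemma Baire_sublevel_ball:
  fixes X :: "'a::complete_space set" and f :: "'a \<Rightarrow> real"
  assumes clX: "closed X" and "X \<noteq> {}"
  obtains n :: nat and x0 r where "x0 \<in> X" "0 < r" "ball x0 r \<inter> X \<subseteq> closure {x\<in>X. f x \<le> real n}"
proof -
  define A where "A n = closure {x\<in>X. f x \<le> real n}" for n :: nat
  have AX: "A n \<subseteq> X" for n
    unfolding A_def using clX by (intro closure_minimal) auto
  have "X \<subseteq> \<Union>(range A)"
  proof
    fix x assume "x \<in> X"
    obtain n :: nat where "f x \<le> real n"
      using real_arch_simple by blast
    then have "x \<in> A n"
      using \<open>x \<in> X\<close> closure_subset[of "{x\<in>X. f x \<le> real n}"] unfolding A_def by auto
    then show "x \<in> \<Union>(range A)"
      by blast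
  qed
  then have UN: "\<Union>(range A) = X"
    using AX by blast
  have "\<exists>n. (top_of_set X) interior_of A n \<noteq> {}"
  proof (rule ccontr)
    assume "\<nexists>n. (top_of_set X) interior_of A n \<noteq> {}"
    moreover have "completely_metrizable_space (top_of_set X)"
      using completely_metrizable_space_closedin[OF completely_metrizable_space_euclidean]
        closed_closedin clX by blast
    moreover have "closedin (top_of_set X) (A n)" for n
      using AX unfolding A_def by (intro closed_subset) auto
    ultimately have "(top_of_set X) interior_of \<Union>(range A) = {}"
      by (intro Baire_category_alt) auto
    then show False
      using UN \<open>X \<noteq> {}\<close> interior_of_topspace[of "top_of_set X"] by simp
  qed
  then obtain n x0 where x0: "x0 \<in> (top_of_set X) interior_of A n"
    by blast
  moreover have "openin (top_of_set X) ((top_of_set X) interior_of A n)"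
    by (rule openin_interior_of)
  ultimately obtain r where "0 < r" "ball x0 r \<inter> X \<subseteq> (top_of_set X) interior_of A n"
    unfolding openin_contains_ball by (meson subsetD)
  moreover have "x0 \<in> X"
    using x0 interior_of_subset[of "top_of_set X" "A n"] AX by blast
  ultimately show ?thesis
    using that interior_of_subset[of "top_of_set X" "A n"] unfolding A_def by blast
qed

lemma closure_symmetric:
  fixes K :: "'a::real_normed_vector set"
  assumes "\<And>x. x \<in> K \<Longrightarrow> - x \<in> K" "y \<in> closure K"
  shows "- y \<in> closure K"
proof -
  have "- y \<in> closure (scaleR (- 1) ` K)"
    using assms(2) closure_scaleR[of "- 1" K] by force
  moreover have "scaleR (- 1) ` K \<subseteq> K"
    using assms(1) by auto
  ultimately show ?thesis
    using closure_mono by blast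
qed

lemma ball_subset_closure_recentre:
  fixes K X :: "'a::real_normed_vector set"
  assumes X: "subspace X" and K: "convex K" "\<And>x. x \<in> K \<Longrightarrow> - x \<in> K"
    and x0: "x0 \<in> X" and ball: "ball x0 r \<inter> X \<subseteq> closure K"
  shows "ball 0 r \<inter> X \<subseteq> closure K"
proof
  fix x assume x: "x \<in> ball 0 r \<inter> X"
  then have "x0 + x \<in> ball x0 r \<inter> X" "x0 - x \<in> ball x0 r \<inter> X"
    using x0 X by (auto simp: dist_norm subspace_add subspace_diff)
  then have "x0 + x \<in> closure K" "- (x0 - x) \<in> closure K"
    using ball closure_symmetric[OF K(2)] by blast+
  then have "(1/2) *\<^sub>R (x0 + x) + (1/2) *\<^sub>R (- (x0 - x)) \<in> closure K"
    using convex_closure[OF K(1)] by (intro convexD) auto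
  moreover have "(1/2) *\<^sub>R (x0 + x) + (1/2) *\<^sub>R (- (x0 - x)) = x"
    by (simp add: scaleR_add_right scaleR_diff_right flip: scaleR_add_left)
  ultimately show "x \<in> closure K"
    by simp
qed

lemma closure_sublevel_rescale:
  fixes T :: "'a::real_normed_vector \<Rightarrow> 'b::real_normed_vector"
  assumes lin: "real_linear_on X T" and r: "0 < r"
    and ball: "ball 0 r \<inter> X \<subseteq> closure {x\<in>X. norm (T x) \<le> c}" and x: "x \<in> X"
  shows "x \<in> closure {y\<in>X. norm (T y) \<le> 2 * c / r * norm x}"
proof (cases "x = 0")
  case True
  then show ?thesis
    using x real_linear_on_zero[OF lin] closure_subset by fastforce
next
  case False
  define s where "s = r / (2 * norm x)"
  have s: "0 < s"
    using False r by (simp add: s_def)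
  have "s *\<^sub>R x \<in> ball 0 r \<inter> X"
    using False r x real_linear_onD(1)[OF lin] by (simp add: s_def subspace_scale)
  then have "x \<in> scaleR (1 / s) ` closure {x\<in>X. norm (T x) \<le> c}"
    using ball s by (intro image_eqI[of _ _ "s *\<^sub>R x"]) auto
  then have "x \<in> closure (scaleR (1 / s) ` {x\<in>X. norm (T x) \<le> c})"
    by (simp add: closure_scaleR)
  moreover have "scaleR (1 / s) ` {x\<in>X. norm (T x) \<le> c} \<subseteq> {y\<in>X. norm (T y) \<le> 2 * c / r * norm x}"
  proof clarify
    fix y assume y: "y \<in> X" "norm (T y) \<le> c"
    have "norm (T ((1 / s) *\<^sub>R y)) = norm (T y) / s"
      using s y real_linear_onD(3)[OF lin] by simp
    also have "\<dots> \<le> c / s"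
      using s y by (simp add: divide_right_mono)
    also have "\<dots> = 2 * c / r * norm x"
      using False r by (simp add: s_def field_simps)
    finally show "(1 / s) *\<^sub>R y \<in> X \<and> norm (T ((1 / s) *\<^sub>R y)) \<le> 2 * c / r * norm x"
      using y real_linear_onD(1)[OF lin] by (simp add: subspace_scale)
  qed
  ultimately show ?thesis
    using closure_mono by blast
qed

lemma approximating_series_exists:
  fixes T :: "'a::real_normed_vector \<Rightarrow> 'b::real_normed_vector" and c :: "nat \<Rightarrow> real"
  assumes X: "subspace X" and M: "0 \<le> M"
    and approx: "\<And>x. x \<in> X \<Longrightarrow> x \<in> closure {y\<in>X. norm (T y) \<le> M * norm x}"
    and x: "x \<in> X" and c: "\<And>k. 0 < c k" and x_c: "norm x \<le> c 0"
  obtains y where "\<And>k. y k \<in> X" "\<And>k. norm (T (y k)) \<le> M * c k"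
    "\<And>N. norm (x - (\<Sum>k<N. y k)) \<le> c N"
proof -
  have "\<exists>y. y \<in> X \<and> norm (T y) \<le> M * norm u \<and> norm (u - y) < e"
    if "u \<in> X" "0 < e" for u e
    using approx[OF that(1)] that(2) unfolding closure_approachable
    by (auto simp: dist_norm norm_minus_commute)
  then obtain step where step: "\<And>u e. u \<in> X \<Longrightarrow> 0 < e \<Longrightarrow>
      step u e \<in> X \<and> norm (T (step u e)) \<le> M * norm u \<and> norm (u - step u e) < e"
    by metis
  define u where "u = rec_nat x (\<lambda>k v. v - step v (c (Suc k)))"
  define y where "y k = step (u k) (c (Suc k))" for k
  have u_Suc: "u (Suc k) = u k - y k" for k
    by (simp add: u_def y_def)
  have u: "u k \<in> X \<and> norm (u k) \<le> c k" for k
  proof (induction k)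
    case 0
    show ?case using x x_c by (simp add: u_def)
  next
    case (Suc k)
    then show ?case
      using step[of "u k" "c (Suc k)"] c X by (simp add: u_Suc y_def subspace_diff)
  qed
  show ?thesis
  proof
    show "y k \<in> X" for k
      using step u c by (simp add: y_def)
    have "norm (T (y k)) \<le> M * norm (u k)" for k
      using step u c by (simp add: y_def)
    then show "norm (T (y k)) \<le> M * c k" for k
      using u M by (meson mult_left_mono order_trans)
    have "x - (\<Sum>k<N. y k) = u N" for N
      by (induction N) (simp_all add: u_Suc, simp add: u_def)
    then show "norm (x - (\<Sum>k<N. y k)) \<le> c N" for N
      using u by simp
  qed
qed

lemma closed_graph_op_suminf:
  fixes T :: "'a::real_normed_vector \<Rightarrow> 'b::real_normed_vector"
  assumes lin: "real_linear_on X T" and G: "closed (graph_op X T)" and y: "\<And>k. y k \<in> X"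
    and x: "(\<lambda>N. \<Sum>k<N. y k) \<longlonglongrightarrow> x" and Ty: "summable (\<lambda>k. T (y k))"
  shows "T x = (\<Sum>k. T (y k))"
proof -
  have "(\<lambda>N. T (\<Sum>k<N. y k)) \<longlonglongrightarrow> (\<Sum>k. T (y k))"
    using summable_LIMSEQ[OF Ty] by (simp add: real_linear_on_sum[OF lin y])
  with x have "(\<lambda>N. ((\<Sum>k<N. y k), T (\<Sum>k<N. y k))) \<longlonglongrightarrow> (x, \<Sum>k. T (y k))"
    by (rule tendsto_Pair)
  moreover have "((\<Sum>k<N. y k), T (\<Sum>k<N. y k)) \<in> graph_op X T" for N
    using y real_linear_onD(1)[OF lin] by (simp add: mem_graph_op_iff subspace_sum)
  ultimately have "(x, \<Sum>k. T (y k)) \<in> graph_op X T"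
    by (rule closed_sequentially[OF G, rotated])
  then show ?thesis
    by (simp add: mem_graph_op_iff)
qed

lemma norm_bound_of_approximation:
  fixes T :: "'a::real_normed_vector \<Rightarrow> 'b::{real_normed_vector, complete_space}"
  assumes lin: "real_linear_on X T" and G: "closed (graph_op X T)" and M: "0 \<le> M"
    and approx: "\<And>x. x \<in> X \<Longrightarrow> x \<in> closure {y\<in>X. norm (T y) \<le> M * norm x}"
    and x: "x \<in> X"
  shows "norm (T x) \<le> 2 * M * norm x"
proof (cases "x = 0")
  case True
  then show ?thesis
    using real_linear_on_zero[OF lin] by simp
next
  case False
  define c where "c k = norm x * (1 / 2) ^ k" for k :: nat
  have c_pos: "0 < c k" for k
    using False by (simp add: c_def)
  have "norm x \<le> c 0"
    by (simp add: c_def)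
  then obtain y where y: "\<And>k. y k \<in> X" "\<And>k. norm (T (y k)) \<le> M * c k"
    and y_sum: "\<And>N. norm (x - (\<Sum>k<N. y k)) \<le> c N"
    using approximating_series_exists[where c = c, OF real_linear_onD(1)[OF lin] M approx x c_pos]
    by blast
  have c_sums: "c sums (2 * norm x)"
    unfolding c_def using sums_mult[OF geometric_sums[of "1 / 2 :: real"], of "norm x"]
    by (simp add: mult.commute)
  then have Mc_sums: "(\<lambda>k. M * c k) sums (2 * M * norm x)"
    using sums_mult[OF c_sums, of M] by (simp add: algebra_simps)
  then have Mc_summable: "summable (\<lambda>k. M * c k)"
    by (rule sums_summable)
  then have Ty_summable: "summable (\<lambda>k. T (y k))"
    by (rule summable_comparison_test_complete[OF y(2)])
  have "c \<longlonglongrightarrow> 0"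
    unfolding c_def by (intro tendsto_mult_right_zero LIMSEQ_power_zero) simp
  then have "(\<lambda>N. (\<Sum>k<N. y k) - x) \<longlonglongrightarrow> 0"
    by (rule Lim_null_comparison[OF always_eventually, rotated])
      (simp add: norm_minus_commute y_sum)
  then have "(\<lambda>N. \<Sum>k<N. y k) \<longlonglongrightarrow> x"
    by (rule LIM_zero_cancel)
  then have "T x = (\<Sum>k. T (y k))"
    using Ty_summable by (rule closed_graph_op_suminf[OF lin G y(1)])
  also have "norm \<dots> \<le> (\<Sum>k. M * c k)"
    by (rule norm_suminf_le_complete[OF y(2) Mc_summable])
  also have "\<dots> = 2 * M * norm x"
    using Mc_sums by (simp add: sums_iff)
  finally show ?thesis .
qed

theorem closed_graph_theorem_on:
  fixes T :: "'a::{real_normed_vector, complete_space} \<Rightarrow> 'b::{real_normed_vector, complete_space}"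
  assumes lin: "real_linear_on X T" and X: "closed X" and G: "closed (graph_op X T)"
  shows "\<exists>C. \<forall>x\<in>X. norm (T x) \<le> C * norm x"
proof -
  have "X \<noteq> {}"
    using subspace_0[OF real_linear_onD(1)[OF lin]] by blast
  then obtain n :: nat and x0 r
    where x0: "x0 \<in> X" and r: "0 < r" and ball: "ball x0 r \<inter> X \<subseteq> closure {x\<in>X. norm (T x) \<le> real n}"
    by (rule Baire_sublevel_ball[OF X])
  have "ball 0 r \<inter> X \<subseteq> closure {x\<in>X. norm (T x) \<le> real n}"
    by (rule ball_subset_closure_recentre[OF real_linear_onD(1)[OF lin]
          real_linear_on_sublevel(1)[OF lin] real_linear_on_sublevel(2)[OF lin] x0 ball])
  then have approx: "x \<in> closure {y\<in>X. norm (T y) \<le> 2 * real n / r * norm x}" if "x \<in> X" for x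
    by (rule closure_sublevel_rescale[OF lin r _ that])
  have "norm (T x) \<le> 2 * (2 * real n / r) * norm x" if "x \<in> X" for x
    by (rule norm_bound_of_approximation[OF lin G _ approx that]) (use r in simp)
  then show ?thesis
    by blast
qed

lemma lin_op_imp_real_linear_on: "lin_op Ja Jb D T \<Longrightarrow> real_linear_on D T"
  by (simp add: lin_op_def real_linear_on_def)

lemma lin_op_snd_comp:
  "lin_op Ja (\<lambda>p. (Jb (fst p), Jc (snd p))) D R \<Longrightarrow> lin_op Ja Jc D (snd \<circ> R)"
  by (simp add: lin_op_def)

lemma graph_norm_eq_norm_Pair: "graph_norm A z = norm (z, A z)"
  by (simp add: graph_norm_def norm_Pair)

lemma bounded_wrt_graph_iff:
  "bounded_wrt_graph Ja Jc D A B \<longleftrightarrow>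
     lin_op Ja Jc D B \<and> (\<exists>C. \<forall>p\<in>graph_op D A. norm (B (fst p)) \<le> C * norm p)"
  by (simp add: bounded_wrt_graph_def graph_norm_eq_norm_Pair ball_graph_op)

theorem lemma2p3:
  fixes JV :: "'v::{real_inner, complete_space} \<Rightarrow> 'v"
    and JW :: "'w::{real_inner, complete_space} \<Rightarrow> 'w"
    and JZ :: "'z::{real_inner, complete_space} \<Rightarrow> 'z"
    and D :: "'z set"
    and R :: "'z \<Rightarrow> 'v \<times> 'w"
  assumes "complex_structure JV" and "complex_structure JW" and "complex_structure JZ"
    and "lin_op JZ (\<lambda>p. (JV (fst p), JW (snd p))) D R"
  shows "((closed_op D R \<and> closed_op D (fst \<circ> R))
            \<longleftrightarrow> (closed_op D (fst \<circ> R) \<and> bounded_wrt_graph JZ JW D (fst \<circ> R) (snd \<circ> R)))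
       \<and> ((closed_op D (fst \<circ> R) \<and> bounded_wrt_graph JZ JW D (fst \<circ> R) (snd \<circ> R))
            \<longleftrightarrow> (closed_op D R \<and> bounded_wrt_graph JZ JW D (fst \<circ> R) (snd \<circ> R)))"
proof -
  let ?F = "fst \<circ> R" and ?H = "snd \<circ> R"
  let ?G = "graph_op D ?F" and ?S = "\<lambda>p. ?H (fst p)"
  have linR: "real_linear_on D R"
    using assms(4) by (rule lin_op_imp_real_linear_on)
  have linS: "real_linear_on ?G ?S"
    by (rule real_linear_on_graph_op[OF real_linear_on_linear_comp[OF linR linear_fst]
          real_linear_on_linear_comp[OF linR linear_snd]])
  have closed_R: "closed_op D R \<longleftrightarrow> closed (graph_op ?G ?S)"
    using closed_graph_op_pair_iff[of D ?F ?H] by (simp add: closed_op_def)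
  have bounded: "bounded_wrt_graph JZ JW D ?F ?H \<longleftrightarrow> (\<exists>C. \<forall>p\<in>?G. norm (?S p) \<le> C * norm p)"
    using lin_op_snd_comp[OF assms(4)] by (simp add: bounded_wrt_graph_iff)
  have "bounded_wrt_graph JZ JW D ?F ?H" if "closed_op D R" "closed_op D ?F"
    using closed_graph_theorem_on[OF linS] that closed_R bounded by (simp add: closed_op_def)
  moreover have "closed_op D R \<longleftrightarrow> closed_op D ?F" if B: "bounded_wrt_graph JZ JW D ?F ?H"
  proof -
    obtain C where "\<forall>p\<in>?G. norm (?S p) \<le> C * norm p"
      using B bounded by blast
    then have "uniformly_continuous_on ?G ?S"
      by (rule lipschitz_on_uniformly_continuous[OF real_linear_on_lipschitz[OF linS]])
    then show ?thesis
      using closed_R closed_graph_op_iff_closed_domain by (simp add: closed_op_def)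
  qed
  ultimately show ?thesis
    by blast
qed

end
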